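(* Under Assumptions 1–2, assume $k_\ell<m_\ell n_\ell$ for all $\ell$. (i) If $0<\beta_1\le1$, $\tau\ge\frac{64}{3\beta_1\underline\delta}$ and $0<\eta\le\min\Big\{\frac1{4L},\sqrt{\frac{3\underline\delta\beta_1^2}{80L^2}},\sqrt{\frac{3\underline\delta}{80\tau^2L^2}},\sqrt{\frac{3\beta_1}{16\tau L^2}}\Big\}$, then deterministic GaSare with MSGD satisfies $\frac1{K\tau}\sum_{t=0}^{K\tau-1}\|\nabla f(x^{(t)})\|_2^2\le\frac{16\Delta}{\underline\delta\eta K\tau}$ for every integer $K\ge1$. (ii) If moreover $\Delta>0$, $T\ge64/(3\underline\delta)$ is an integer and one chooses $\beta_1=1$, $\tau=\lceil64/(3\underline\delta\beta_1)\rceil$, $\eta=\Big(4L+\sqrt{\tfrac{80L^2}{3\underline\delta\beta_1^2}}+\sqrt{\tfrac{80\tau^2L^2}{3\underline\delta}}+\sqrt{\tfrac{16\tau L^2}{3\beta_1}}\Big)^{-1}$, then $\frac1T\sum_{t=0}^{T-1}\|\nabla f(x^{(t)})\|_2^2\le C\frac{L\Delta}{\underline\delta^{5/2}T}$ for an absolute constant $C$.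
   Context: Parameters $x=(\mathrm{vec}(X_1)^\top,\dots,\mathrm{vec}(X_{N_L})^\top)^\top\in\mathbb{R}^d$, $X_\ell\in\mathbb{R}^{m_\ell\times n_\ell}$; $\nabla_\ell$ is the gradient w.r.t. $X_\ell$. Assumption 1: $\inf f>-\infty$. Assumption 2: $\nabla f$ is $L$-Lipschitz in $\|\cdot\|_2$. $\Delta=f(x^{(0)})-\inf f$, $\delta_\ell=k_\ell/(m_\ell n_\ell)$, $\underline\delta=\min_\ell\delta_\ell$. Deterministic GaSare with MSGD: $M_\ell^{(-1)}=0$. For $t\ge0$, $G_\ell^{(t)}=\nabla_\ell f(x^{(t)})$; if $t\equiv0\pmod\tau$, $S_\ell^{(t)}$ is a Top-$k_\ell$ mask of $G_\ell^{(t)}$ (the $0/1$ matrix with exactly $k_\ell$ ones at positions of $k_\ell$ entries of largest absolute value, ties arbitrary), else $S_\ell^{(t)}=S_\ell^{(t-1)}$; $M_\ell^{(t)}=(1-\beta_1)S_\ell^{(t)}\odot M_\ell^{(t-1)}+\beta_1S_\ell^{(t)}\odot G_\ell^{(t)}$; $X_\ell^{(t+1)}=X_\ell^{(t)}-\eta S_\ell^{(t)}\odot M_\ell^{(t)}$ ($\odot$ = entrywise product). *)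

theory Defs
  imports "HOL-Analysis.Analysis"
begin

definition layer_dom :: "nat \<Rightarrow> (nat \<Rightarrow> nat) \<Rightarrow> (nat \<Rightarrow> nat) \<Rightarrow> (nat \<times> nat \<times> nat) set" where
  "layer_dom NL m n = {(l, i, j). l < NL \<and> i < m l \<and> j < n l}"

definition layer :: "('i \<Rightarrow> nat \<times> nat \<times> nat) \<Rightarrow> nat \<Rightarrow> 'i set" where
  "layer coord l = {c. fst (coord c) = l}"

definition mask :: "'i set \<Rightarrow> real ^ 'i::finite" where
  "mask S = (\<chi> c. if c \<in> S then 1 else 0)"

definition is_topk_mask ::
  "('i::finite \<Rightarrow> nat \<times> nat \<times> nat) \<Rightarrow> nat \<Rightarrow> (nat \<Rightarrow> nat) \<Rightarrow> real ^ 'i \<Rightarrow> 'i set \<Rightarrow> bool" where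
  "is_topk_mask coord NL k G S \<longleftrightarrow>
     (\<forall>l<NL. card (S \<inter> layer coord l) = k l) \<and>
     (\<forall>l<NL. \<forall>a \<in> S \<inter> layer coord l. \<forall>b \<in> layer coord l - S. \<bar>G $ b\<bar> \<le> \<bar>G $ a\<bar>)"

text \<open>A run (x, M, S) of deterministic GaSare with MSGD, with gradient field g.
  M t is M^(t); M^(-1) = 0; the product * on real^'i is the entrywise product.\<close>
definition gasare_msgd ::
  "('i::finite \<Rightarrow> nat \<times> nat \<times> nat) \<Rightarrow> nat \<Rightarrow> (nat \<Rightarrow> nat) \<Rightarrow> nat \<Rightarrow> real \<Rightarrow> real \<Rightarrow>
   (real ^ 'i \<Rightarrow> real ^ 'i) \<Rightarrow> (nat \<Rightarrow> real ^ 'i) \<Rightarrow> (nat \<Rightarrow> real ^ 'i) \<Rightarrow> (nat \<Rightarrow> 'i set) \<Rightarrow> bool" where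
  "gasare_msgd coord NL k \<tau> \<beta>1 \<eta> g x M S \<longleftrightarrow>
     (\<forall>t. (if t mod \<tau> = 0 then is_topk_mask coord NL k (g (x t)) (S t) else S t = S (t - 1))
        \<and> M t = (1 - \<beta>1) *\<^sub>R (mask (S t) * (if t = 0 then 0 else M (t - 1)))
                 + \<beta>1 *\<^sub>R (mask (S t) * g (x t))
        \<and> x (Suc t) = x t - \<eta> *\<^sub>R (mask (S t) * M t))"

definition delta_min :: "nat \<Rightarrow> (nat \<Rightarrow> nat) \<Rightarrow> (nat \<Rightarrow> nat) \<Rightarrow> (nat \<Rightarrow> nat) \<Rightarrow> real" where
  "delta_min NL m n k = Min ((\<lambda>l. real (k l) / real (m l * n l)) ` {..<NL})"

end

theory Submission
  imports Defs
begin

text \<open>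
  The masked momentum \<open>M\<close> is an exponential average of masked gradients. Within a period of
  \<open>\<tau>\<close> steps its error \<open>M - S \<odot> \<nabla>f\<close> contracts by \<open>1-\<beta>\<close> per step and grows only by the gradient
  increment, which is at most \<open>L \<eta> \<parallel>M\<parallel>\<close>; over a whole period it contracts by
  \<open>(1-\<beta>)\<^sup>\<tau> \<le> 1/8\<close>, which beats the factor 2 lost when a new mask is chosen. A Top-k mask captures
  a fraction \<open>\<delta>\<close> of \<open>\<parallel>\<nabla>f\<parallel>\<^sup>2\<close> when it is chosen, and approximately so for the rest of the period
  because the gradient drifts little. Summing the descent lemma, in the form
  \<open>\<parallel>S \<odot> \<nabla>f\<parallel>\<^sup>2 + 3/4 \<parallel>M\<parallel>\<^sup>2 - \<parallel>M - S \<odot> \<nabla>f\<parallel>\<^sup>2 \<le> 2 (f(x\<^sub>t) - f(x\<^sub>t\<^sub>+\<^sub>1)) / \<eta>\<close>, and absorbing the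
  error and drift terms, which the step-size conditions make small multiples of \<open>\<Sum>\<parallel>M\<parallel>\<^sup>2\<close>, gives
  \<open>\<Sum>\<^sub>t\<^sub><\<^sub>K\<^sub>\<tau> \<parallel>\<nabla>f(x\<^sub>t)\<parallel>\<^sup>2 \<le> 32/3 (f(x\<^sub>0) - f(x\<^sub>K\<^sub>\<tau>)) / (\<delta> \<eta>)\<close>. For the tuned parameters
  \<open>1/\<eta> = O(L \<delta>\<^sup>-\<^sup>3\<^sup>/\<^sup>2)\<close>, and part (ii) follows from this bound with \<open>K = T\<close>.
\<close>

lemma mask_nth [simp]: "mask S $ c = (if c \<in> S then 1 else 0)"
  by (simp add: mask_def)

lemma norm_power2_eq_sum: "(norm (v::real^'i::finite))^2 = (\<Sum>c\<in>UNIV. (v$c)^2)"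
  unfolding power2_norm_eq_inner by (simp add: inner_vec_def power2_eq_square)

lemma norm_mask_mult_le: "norm (mask S * (v::real^'i::finite)) \<le> norm v"
proof -
  have "(norm (mask S * v))^2 \<le> (norm v)^2"
    unfolding norm_power2_eq_sum by (rule sum_mono) auto
  thus ?thesis by (simp add: power2_le_iff_abs_le)
qed

lemma inner_mask_mult: "(g::real^'i::finite) \<bullet> (mask S * w) = (mask S * g) \<bullet> w"
  by (simp add: inner_vec_def ac_simps)

lemma norm_mask_mult_diff_power2_le:
  "(norm (mask S * a - (b::real^'i::finite)))^2 \<le> (norm (a - b))^2 + (norm b)^2"
  unfolding norm_power2_eq_sum sum.distrib[symmetric] by (rule sum_mono) auto

lemma norm_power2_le_twice:
  "(norm (p::'a::real_normed_vector))^2 \<le> 2 * (norm q)^2 + 2 * (norm (p - q))^2"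
proof -
  have "(norm p)^2 \<le> (norm q + norm (p - q))^2"
    using norm_triangle_ineq[of q "p - q"] by (intro power_mono) auto
  also have "\<dots> \<le> 2 * (norm q)^2 + 2 * (norm (p - q))^2"
    using zero_le_power2[of "norm q - norm (p - q)"] by (simp add: power2_eq_square algebra_simps)
  finally show ?thesis .
qed

lemma descent_lemma:
  fixes f :: "'a::real_inner \<Rightarrow> real"
  assumes grad: "\<And>x. (f has_derivative (\<lambda>h. g x \<bullet> h)) (at x)"
    and lip: "\<And>x y. norm (g x - g y) \<le> L * norm (x - y)"
  shows "f y \<le> f x + g x \<bullet> (y - x) + L / 2 * (norm (y - x))^2"
proof -
  define h where "h = y - x"
  define \<phi> where "\<phi> s = f (x + s *\<^sub>R h) - s * (g x \<bullet> h) - L / 2 * s^2 * (norm h)^2" for s :: real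
  have deriv: "DERIV \<phi> s :> (g (x + s *\<^sub>R h) \<bullet> h - g x \<bullet> h - L * s * (norm h)^2)" for s
  proof -
    have "((\<lambda>s. x + s *\<^sub>R h) has_derivative (\<lambda>t. t *\<^sub>R h)) (at s)"
      by (auto intro!: derivative_eq_intros)
    from has_derivative_compose[OF this grad]
    have "((\<lambda>s. f (x + s *\<^sub>R h)) has_real_derivative (g (x + s *\<^sub>R h) \<bullet> h)) (at s)"
      unfolding has_field_derivative_def by (simp add: mult.commute[of _ "g (x + s *\<^sub>R h) \<bullet> h"])
    thus ?thesis unfolding \<phi>_def by (auto intro!: derivative_eq_intros)
  qed
  have "\<phi> 1 \<le> \<phi> 0"
  proof (rule DERIV_nonpos_imp_nonincreasing[of 0 1 \<phi>])
    fix s :: real assume s: "0 \<le> s" "s \<le> 1"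
    have "g (x + s *\<^sub>R h) \<bullet> h - g x \<bullet> h = (g (x + s *\<^sub>R h) - g x) \<bullet> h"
      by (simp add: inner_diff_left)
    also have "\<dots> \<le> norm (g (x + s *\<^sub>R h) - g x) * norm h"
      by (rule norm_cauchy_schwarz)
    also have "\<dots> \<le> (L * norm (s *\<^sub>R h)) * norm h"
      using lip[of "x + s *\<^sub>R h" x] by (intro mult_right_mono) auto
    also have "\<dots> = L * s * (norm h)^2" using s by (simp add: power2_eq_square)
    finally show "\<exists>y. DERIV \<phi> s :> y \<and> y \<le> 0" using deriv[of s] by auto
  qed auto
  thus ?thesis unfolding \<phi>_def h_def by (simp add: algebra_simps)
qed

lemma card_mult_sum_le_card_mult_sum:
  fixes y :: "'a \<Rightarrow> real"
  assumes "finite C" "finite U" "\<And>a b. a \<in> C \<Longrightarrow> b \<in> U \<Longrightarrow> y b \<le> y a"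
  shows "real (card C) * sum y U \<le> real (card U) * sum y C"
proof -
  have "0 \<le> (\<Sum>a\<in>C. \<Sum>b\<in>U. y a - y b)"
    using assms by (intro sum_nonneg) auto
  also have "\<dots> = real (card U) * sum y C - real (card C) * sum y U"
    by (simp add: sum_subtractf sum_distrib_left sum.swap[of _ C U] sum_distrib_right mult.commute)
  finally show ?thesis by simp
qed

lemma fst_coord_less:
  assumes "bij_betw coord UNIV (layer_dom NL m n)"
  shows "fst (coord c) < NL"
  using bij_betw_apply[OF assms, of c] by (cases "coord c") (auto simp: layer_dom_def)

lemma card_layer:
  assumes coord: "bij_betw coord UNIV (layer_dom NL m n)" and l: "l < NL"
  shows "card (layer coord l) = m l * n l"
proof -
  have image: "coord ` layer coord l = {l} \<times> {..<m l} \<times> {..<n l}"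
  proof
    show "coord ` layer coord l \<subseteq> {l} \<times> {..<m l} \<times> {..<n l}"
    proof
      fix p assume "p \<in> coord ` layer coord l"
      then obtain c where c: "p = coord c" "fst (coord c) = l" by (auto simp: layer_def)
      have "coord c \<in> layer_dom NL m n" using bij_betw_apply[OF coord] by auto
      thus "p \<in> {l} \<times> {..<m l} \<times> {..<n l}" using c
        by (cases "coord c") (auto simp: layer_dom_def)
    qed
    show "{l} \<times> {..<m l} \<times> {..<n l} \<subseteq> coord ` layer coord l"
    proof
      fix p assume p: "p \<in> {l} \<times> {..<m l} \<times> {..<n l}"
      hence "p \<in> layer_dom NL m n" using l by (auto simp: layer_dom_def)
      then obtain c where "coord c = p" using coord unfolding bij_betw_def by (metis imageE)
      thus "p \<in> coord ` layer coord l" using p by (auto simp: layer_def)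
    qed
  qed
  have "inj_on coord (layer coord l)"
    using coord by (auto simp: bij_betw_def intro: inj_on_subset)
  hence "card (layer coord l) = card (coord ` layer coord l)" by (simp add: card_image)
  also have "\<dots> = m l * n l" unfolding image by (simp add: card_cartesian_product)
  finally show ?thesis .
qed

lemma sum_layers:
  assumes "bij_betw coord UNIV (layer_dom NL m n)"
  shows "(\<Sum>l<NL. sum h (layer coord l)) = sum h (UNIV :: 'i::finite set)"
proof -
  have "(\<Sum>l<NL. sum h {c. c \<in> UNIV \<and> fst (coord c) = l}) = sum h UNIV"
    by (rule sum.group) (use fst_coord_less[OF assms] in auto)
  thus ?thesis by (simp add: layer_def)
qed

lemma delta_min_le:
  "l < NL \<Longrightarrow> delta_min NL m n k \<le> real (k l) / real (m l * n l)"
  unfolding delta_min_def by (intro Min_le) auto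

lemma delta_min_bounds:
  assumes coord: "bij_betw coord UNIV (layer_dom NL m n)"
    and kpos: "\<And>l. l < NL \<Longrightarrow> 0 < k l"
    and klt: "\<And>l. l < NL \<Longrightarrow> k l < m l * n l"
  shows "0 < delta_min NL m n k" "delta_min NL m n k \<le> 1"
proof -
  have "0 < NL" using fst_coord_less[OF coord, of undefined] by simp
  hence "delta_min NL m n k \<in> (\<lambda>l. real (k l) / real (m l * n l)) ` {..<NL}"
    unfolding delta_min_def by (intro Min_in) auto
  then obtain l where l: "l < NL" "delta_min NL m n k = real (k l) / real (m l * n l)" by auto
  have "0 < real (k l)" "real (k l) < real (m l * n l)"
    using kpos[OF l(1)] klt[OF l(1)] by (simp_all only: of_nat_0_less_iff of_nat_less_iff)
  thus "0 < delta_min NL m n k" "delta_min NL m n k \<le> 1" using l(2) by auto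
qed

lemma topk_mask_norm_ge:
  fixes G :: "real^'i::finite"
  assumes coord: "bij_betw coord UNIV (layer_dom NL m n)"
    and klt: "\<And>l. l < NL \<Longrightarrow> k l < m l * n l"
    and topk: "is_topk_mask coord NL k G S"
  shows "delta_min NL m n k * (norm G)^2 \<le> (norm (mask S * G))^2"
proof -
  define y where "y c = (G $ c)^2" for c
  define \<delta> where "\<delta> = delta_min NL m n k"
  have per_layer: "\<delta> * sum y (layer coord l) \<le> sum y (S \<inter> layer coord l)" if l: "l < NL" for l
  proof -
    define C where "C = S \<inter> layer coord l"
    define U where "U = layer coord l - S"
    have split: "layer coord l = C \<union> U" "C \<inter> U = {}" unfolding C_def U_def by auto
    have card_C: "card C = k l" using topk l unfolding is_topk_mask_def C_def by auto
    have card_U: "card U = m l * n l - k l"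
      using card_layer[OF coord l] card_C split card_Un_disjoint[of C U]
      by (metis add_diff_cancel_left' finite)
    have "real (card C) * sum y U \<le> real (card U) * sum y C"
    proof (rule card_mult_sum_le_card_mult_sum)
      fix a b assume "a \<in> C" "b \<in> U"
      hence "\<bar>G $ b\<bar> \<le> \<bar>G $ a\<bar>" using topk l unfolding is_topk_mask_def C_def U_def by auto
      thus "y b \<le> y a" unfolding y_def by (simp add: abs_le_square_iff)
    qed auto
    moreover have "sum y (layer coord l) = sum y C + sum y U"
      using split by (simp add: sum.union_disjoint)
    ultimately have "real (k l) * sum y (layer coord l) \<le> real (m l * n l) * sum y C"
      using card_C card_U klt[OF l] by (simp add: of_nat_diff algebra_simps)
    moreover have "0 < real (m l * n l)" by (rule of_nat_0_less_iff[THEN iffD2]) (use klt[OF l] in linarith)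
    ultimately have "real (k l) / real (m l * n l) * sum y (layer coord l) \<le> sum y C"
      by (simp add: pos_divide_le_eq mult.commute del: of_nat_mult)
    moreover have "\<delta> * sum y (layer coord l) \<le> real (k l) / real (m l * n l) * sum y (layer coord l)"
      unfolding \<delta>_def by (intro mult_right_mono delta_min_le l) (simp add: y_def sum_nonneg)
    ultimately show ?thesis unfolding C_def by linarith
  qed
  have masked: "((mask S * G) $ c)^2 = (if c \<in> S then y c else 0)" for c by (simp add: y_def)
  have "\<delta> * (norm G)^2 = (\<Sum>l<NL. \<delta> * sum y (layer coord l))"
    by (simp add: norm_power2_eq_sum sum_layers[OF coord] y_def sum_distrib_left[symmetric])
  also have "\<dots> \<le> (\<Sum>l<NL. sum y (S \<inter> layer coord l))"
    by (intro sum_mono per_layer) simp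
  also have "\<dots> = (\<Sum>l<NL. sum (\<lambda>c. ((mask S * G) $ c)^2) (layer coord l))"
    unfolding masked by (simp add: Int_commute[of S] sum.inter_restrict)
  also have "\<dots> = (norm (mask S * G))^2" by (simp only: sum_layers[OF coord] norm_power2_eq_sum)
  finally show ?thesis unfolding \<delta>_def .
qed

lemma momentum_power2_le:
  fixes \<beta> u v :: real
  assumes \<beta>: "0 < \<beta>" "\<beta> \<le> 1"
  shows "(1-\<beta>)^2 * (u+v)^2 \<le> (1-\<beta>) * u^2 + v^2 / \<beta>"
proof -
  have "2 * \<beta> * u * v \<le> \<beta>^2 * u^2 + v^2"
    using zero_le_power2[of "\<beta>*u - v"] by (simp add: power2_eq_square algebra_simps)
  hence "2 * u * v \<le> \<beta> * u^2 + v^2/\<beta>"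
    using \<beta> by (simp add: field_simps power2_eq_square)
  hence "(u+v)^2 \<le> (1+\<beta>) * u^2 + (1 + 1/\<beta>) * v^2" by (simp add: power2_eq_square algebra_simps)
  hence "(1-\<beta>)^2 * (u+v)^2 \<le> (1-\<beta>)^2 * ((1+\<beta>) * u^2 + (1 + 1/\<beta>) * v^2)"
    by (rule mult_left_mono) simp
  also have "\<dots> = ((1-\<beta>)*(1-\<beta>^2)) * u^2 + ((1-\<beta>)*(1-\<beta>^2)) * (v^2/\<beta>)"
    using \<beta> by (simp add: power2_eq_square field_simps)
  also have "\<dots> \<le> (1-\<beta>) * u^2 + 1 * (v^2/\<beta>)"
  proof (intro add_mono mult_right_mono)
    show "(1-\<beta>)*(1-\<beta>^2) \<le> 1-\<beta>" using \<beta> by (simp add: mult_left_le)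
    show "(1-\<beta>)*(1-\<beta>^2) \<le> 1" using \<beta> by (intro mult_le_one) (auto simp: power_le_one)
  qed (use \<beta> in auto)
  finally show ?thesis by simp
qed

lemma one_minus_power_le_eighth:
  fixes \<beta> :: real
  assumes "0 < \<beta>" "\<beta> \<le> 1" "7 \<le> real n * \<beta>"
  shows "(1-\<beta>)^n \<le> 1/8"
proof -
  have nonneg: "0 \<le> (1-\<beta>)^n" using assms by simp
  have "(1 + real n * \<beta>) * (1-\<beta>)^n \<le> (1+\<beta>)^n * (1-\<beta>)^n"
    using assms nonneg by (intro mult_right_mono Bernoulli_inequality) auto
  also have "\<dots> = (1 - \<beta>*\<beta>)^n" by (simp add: power_mult_distrib[symmetric] algebra_simps)
  also have "\<dots> \<le> 1" using assms by (intro power_le_one) (auto simp: mult_le_one)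
  finally have "(1 + real n * \<beta>) * (1-\<beta>)^n \<le> 1" .
  moreover have "8 * (1-\<beta>)^n \<le> (1 + real n * \<beta>) * (1-\<beta>)^n"
    using assms nonneg by (intro mult_right_mono) auto
  ultimately show ?thesis by simp
qed

lemma sum_lessThan_mult_eq_sum_blocks:
  fixes K \<tau> :: nat
  shows "(\<Sum>t<K*\<tau>. h t) = (\<Sum>s<K. \<Sum>j<\<tau>. h (s*\<tau> + j))"
proof -
  have "(\<Sum>t<K*\<tau>. h t) = (\<Sum>s<K. sum h {s*\<tau>..<s*\<tau>+\<tau>})"
    by (rule sum.nat_group[symmetric])
  also have "\<dots> = (\<Sum>s<K. \<Sum>j<\<tau>. h (s*\<tau> + j))"
  proof (rule sum.cong[OF refl])
    fix s
    have "sum h {0 + s*\<tau>..<\<tau> + s*\<tau>} = sum (h \<circ> plus (s*\<tau>)) {0..<\<tau>}"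
      by (rule sum.atLeastLessThan_shift_bounds)
    thus "sum h {s*\<tau>..<s*\<tau>+\<tau>} = (\<Sum>j<\<tau>. h (s*\<tau> + j))"
      by (simp add: add.commute atLeast0LessThan)
  qed
  finally show ?thesis .
qed

text \<open>The step-size conditions make the error and drift terms, here \<open>p V\<close> and \<open>q V\<close>, small
  enough to be absorbed by the \<open>3/4 V\<close> margin of the descent inequality.\<close>
lemma error_terms_absorbed:
  fixes A V W X Z F p q :: real
  assumes descent: "A + 3/4 * V - W \<le> 2 * F"
    and err: "W \<le> X + p * V" "X \<le> 8/3 * Z + 16/3 * (p * V)"
    and grad: "64/3 * Z \<le> 2 * A + 2 * (q * V)"
    and small: "p \<le> 3/80" "q \<le> 3/80" "0 \<le> q"
    and nonneg: "0 \<le> A" "0 \<le> V"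
  shows "4 * A + 6 * (q * V) \<le> 32/3 * F"
proof -
  have "p * V \<le> 3/80 * V" "q * V \<le> 3/80 * V"
    using mult_right_mono[OF small(1) nonneg(2)] mult_right_mono[OF small(2) nonneg(2)] by auto
  moreover have "0 \<le> q * V" using small(3) nonneg(2) by simp
  ultimately show ?thesis using assms by linarith
qed

text \<open>A run of GaSare with MSGD, seen only through the descent inequality, the Lipschitz bound
  and the fraction \<open>\<delta>\<close> of the squared gradient norm kept by a freshly chosen mask.\<close>
locale masked_momentum_run =
  fixes f :: "real^'i::finite \<Rightarrow> real" and g :: "real^'i \<Rightarrow> real^'i"
    and L \<beta> \<eta> \<delta> :: real and \<tau> :: nat
    and x M :: "nat \<Rightarrow> real^'i" and S :: "nat \<Rightarrow> 'i set"
  assumes descent: "\<And>t. f (x (Suc t)) \<le> f (x t) + g (x t) \<bullet> (x (Suc t) - x t)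
                                         + L / 2 * (norm (x (Suc t) - x t))^2"
    and lipschitz: "\<And>a b. norm (g a - g b) \<le> L * norm (a - b)"
    and L_nonneg: "0 \<le> L"
    and beta_pos: "0 < \<beta>" and beta_le_1: "\<beta> \<le> 1"
    and delta_pos: "0 < \<delta>" and delta_le_1: "\<delta> \<le> 1"
    and eta_pos: "0 < \<eta>" and eta_small: "L * \<eta> \<le> 1/4"
    and tau_pos: "0 < \<tau>"
    and momentum: "\<And>t. M t = (1-\<beta>) *\<^sub>R (mask (S t) * (if t = 0 then 0 else M (t-1)))
                              + \<beta> *\<^sub>R (mask (S t) * g (x t))"
    and iterate: "\<And>t. x (Suc t) = x t - \<eta> *\<^sub>R (mask (S t) * M t)"
    and mask_kept: "\<And>t. t mod \<tau> \<noteq> 0 \<Longrightarrow> S t = S (t-1)"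
    and mask_captures:
      "\<And>t. t mod \<tau> = 0 \<Longrightarrow> \<delta> * (norm (g (x t)))^2 \<le> (norm (mask (S t) * g (x t)))^2"
begin

definition grad :: "nat \<Rightarrow> real^'i" where "grad t = g (x t)"

definition err :: "nat \<Rightarrow> real^'i" where "err t = M t - mask (S t) * grad t"

definition grad_sq :: "nat \<Rightarrow> real" where "grad_sq t = (norm (grad t))^2"

definition masked_sq :: "nat \<Rightarrow> real" where "masked_sq t = (norm (mask (S t) * grad t))^2"

definition mom_sq :: "nat \<Rightarrow> real" where "mom_sq t = (norm (M t))^2"

definition err_sq :: "nat \<Rightarrow> real" where "err_sq t = (norm (err t))^2"

definition \<kappa> :: real where "\<kappa> = (L * \<eta>)^2"

definition period_sum :: "(nat \<Rightarrow> real) \<Rightarrow> nat \<Rightarrow> real" where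
  "period_sum h s = (\<Sum>j<\<tau>. h (s*\<tau> + j))"

lemma squares_nonneg: "0 \<le> grad_sq t" "0 \<le> masked_sq t" "0 \<le> mom_sq t" "0 \<le> err_sq t" "0 \<le> \<kappa>"
  by (simp_all add: grad_sq_def masked_sq_def mom_sq_def err_sq_def \<kappa>_def)

lemma period_sum_nonneg: "(\<And>t. 0 \<le> h t) \<Longrightarrow> 0 \<le> period_sum h s"
  unfolding period_sum_def by (simp add: sum_nonneg)

lemma sum_period_sum: "(\<Sum>t<K*\<tau>. h t) = (\<Sum>s<K. period_sum h s)"
  unfolding period_sum_def by (rule sum_lessThan_mult_eq_sum_blocks)

lemma mask_mult_momentum: "mask (S t) * M t = M t"
  by (subst (2) momentum, subst momentum) (simp add: vec_eq_iff algebra_simps)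

lemma iterate_diff: "x (Suc t) - x t = - \<eta> *\<^sub>R M t"
  using iterate[of t] by (simp add: mask_mult_momentum)

lemma norm_iterate_diff: "norm (x (Suc t) - x t) = \<eta> * norm (M t)"
  using eta_pos by (simp add: iterate_diff)

lemma grad_diff_sq_le: "(norm (grad (Suc t) - grad t))^2 \<le> \<kappa> * mom_sq t"
proof -
  have "norm (grad (Suc t) - grad t) \<le> L * \<eta> * norm (M t)"
    using lipschitz[of "x (Suc t)" "x t"] by (simp add: grad_def norm_iterate_diff mult.assoc)
  hence "(norm (grad (Suc t) - grad t))^2 \<le> (L * \<eta> * norm (M t))^2"
    by (intro power_mono) auto
  thus ?thesis by (simp add: \<kappa>_def mom_sq_def power_mult_distrib)
qed

lemma one_step_descent:
  "masked_sq t + 3/4 * mom_sq t - err_sq t \<le> 2 * (f (x t) - f (x (Suc t))) / \<eta>"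
proof -
  have "grad t \<bullet> M t = (mask (S t) * grad t) \<bullet> M t"
    using inner_mask_mult[of "grad t" "S t" "M t"] by (simp add: mask_mult_momentum)
  moreover have "err_sq t = mom_sq t - 2 * ((mask (S t) * grad t) \<bullet> M t) + masked_sq t"
    unfolding err_sq_def err_def mom_sq_def masked_sq_def
    by (simp add: power2_norm_eq_inner inner_diff inner_commute)
  ultimately have inner: "\<eta> * (grad t \<bullet> M t) = \<eta> / 2 * (masked_sq t + mom_sq t - err_sq t)"
    by simp
  have "f (x (Suc t)) \<le> f (x t) - \<eta> * (grad t \<bullet> M t) + L / 2 * (\<eta>^2 * mom_sq t)"
    using descent[of t] by (simp add: iterate_diff norm_iterate_diff grad_def mom_sq_def power_mult_distrib)
  moreover have "L / 2 * (\<eta>^2 * mom_sq t) \<le> (1/4) * \<eta> / 2 * mom_sq t"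
  proof -
    have "L / 2 * (\<eta>^2 * mom_sq t) = (L * \<eta>) * \<eta> / 2 * mom_sq t" by (simp add: power2_eq_square)
    also have "\<dots> \<le> (1/4) * \<eta> / 2 * mom_sq t"
      using eta_small eta_pos by (intro mult_right_mono divide_right_mono) (auto simp: squares_nonneg)
    finally show ?thesis .
  qed
  ultimately have "\<eta> / 2 * (masked_sq t + 3/4 * mom_sq t - err_sq t) \<le> f (x t) - f (x (Suc t))"
    unfolding inner by (simp add: algebra_simps)
  thus ?thesis using eta_pos by (simp add: field_simps)
qed

lemma mask_within_period: "j < \<tau> \<Longrightarrow> S (s * \<tau> + j) = S (s * \<tau>)"
proof (induction j)
  case (Suc j)
  hence "(s * \<tau> + Suc j) mod \<tau> \<noteq> 0" by simp
  thus ?case using mask_kept Suc by fastforce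
qed simp

lemma err_sq_step:
  assumes "t mod \<tau> \<noteq> 0"
  shows "err_sq t \<le> (1-\<beta>) * err_sq (t-1) + \<kappa> / \<beta> * mom_sq (t-1)"
proof -
  obtain s where t: "t = Suc s" using assms by (cases t) auto
  have same_mask: "S (Suc s) = S s" using mask_kept[OF assms] t by simp
  have "M (Suc s) = (1-\<beta>) *\<^sub>R M s + \<beta> *\<^sub>R (mask (S s) * grad (Suc s))"
    using momentum[of "Suc s"] same_mask mask_mult_momentum[of s] by (simp add: grad_def)
  hence err_eq: "err (Suc s) = (1-\<beta>) *\<^sub>R (err s + mask (S s) * (grad s - grad (Suc s)))"
    unfolding err_def same_mask by (simp add: right_diff_distrib algebra_simps)
  define u where "u = norm (err s)"
  define v where "v = norm (grad (Suc s) - grad s)"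
  have "norm (mask (S s) * (grad s - grad (Suc s))) \<le> v"
    using norm_mask_mult_le[of "S s" "grad s - grad (Suc s)"] by (simp add: v_def norm_minus_commute)
  hence "norm (err s + mask (S s) * (grad s - grad (Suc s))) \<le> u + v"
    unfolding u_def by (meson add_left_mono norm_triangle_ineq order_trans)
  hence "norm (err (Suc s)) \<le> (1-\<beta>) * (u + v)"
    using beta_le_1 by (simp add: err_eq mult_left_mono)
  hence "err_sq (Suc s) \<le> (1-\<beta>)^2 * (u+v)^2"
    unfolding err_sq_def using beta_le_1 by (metis norm_ge_zero power_mono power_mult_distrib)
  also have "\<dots> \<le> (1-\<beta>) * u^2 + v^2 / \<beta>" by (rule momentum_power2_le[OF beta_pos beta_le_1])
  also have "v^2 / \<beta> \<le> \<kappa> * mom_sq s / \<beta>"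
    using grad_diff_sq_le[of s] beta_pos unfolding v_def by (intro divide_right_mono) auto
  finally show ?thesis using t by (simp add: u_def err_sq_def)
qed

text \<open>A new mask may drop coordinates carrying momentum; that loss is bounded by the current
  gradient norm.\<close>
lemma err_sq_restart:
  assumes "t mod \<tau> = 0" "1 \<le> t"
  shows "err_sq t \<le> (1-\<beta>) * (2 * err_sq (t-1) + 2 * \<kappa> * mom_sq (t-1) + 2 * grad_sq t)"
proof -
  obtain s where t: "t = Suc s" using assms by (cases t) auto
  have err_eq: "err (Suc s) = (1-\<beta>) *\<^sub>R (mask (S (Suc s)) * (M s - grad (Suc s)))"
    using momentum[of "Suc s"] unfolding err_def by (simp add: grad_def right_diff_distrib algebra_simps)
  define u where "u = norm (err s)"
  define w where "w = norm (mask (S s) * grad s - grad (Suc s))"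
  have w_sq: "w^2 \<le> \<kappa> * mom_sq s + grad_sq (Suc s)"
  proof -
    have "w^2 \<le> (norm (grad s - grad (Suc s)))^2 + (norm (grad (Suc s)))^2"
      unfolding w_def by (rule norm_mask_mult_diff_power2_le)
    thus ?thesis using grad_diff_sq_le[of s] by (simp add: grad_sq_def norm_minus_commute)
  qed
  have split: "M s - grad (Suc s) = err s + (mask (S s) * grad s - grad (Suc s))"
    by (simp add: err_def)
  have "norm (mask (S (Suc s)) * (M s - grad (Suc s))) \<le> u + w"
    using norm_mask_mult_le[of "S (Suc s)" "M s - grad (Suc s)"]
      norm_triangle_ineq[of "err s" "mask (S s) * grad s - grad (Suc s)"]
    unfolding u_def w_def split by linarith
  hence "norm (err (Suc s)) \<le> (1-\<beta>) * (u + w)"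
    using beta_le_1 by (simp add: err_eq mult_left_mono)
  hence "err_sq (Suc s) \<le> (1-\<beta>)^2 * (u+w)^2"
    unfolding err_sq_def using beta_le_1 by (metis norm_ge_zero power_mono power_mult_distrib)
  also have "\<dots> \<le> (1-\<beta>) * (2 * u^2 + 2 * w^2)"
  proof (rule mult_mono)
    show "(1-\<beta>)^2 \<le> 1-\<beta>" using beta_pos beta_le_1 by (simp add: power2_eq_square mult_left_le)
    show "(u+w)^2 \<le> 2 * u^2 + 2 * w^2"
      using zero_le_power2[of "u - w"] by (simp add: power2_eq_square algebra_simps)
  qed (use beta_le_1 in auto)
  also have "\<dots> \<le> (1-\<beta>) * (2 * err_sq s + 2 * \<kappa> * mom_sq s + 2 * grad_sq (Suc s))"
    using w_sq beta_le_1 by (intro mult_left_mono) (auto simp: u_def err_sq_def)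
  finally show ?thesis using t by simp
qed

lemma err_sq_0: "err_sq 0 \<le> grad_sq 0"
proof -
  have "err 0 = - ((1-\<beta>) *\<^sub>R (mask (S 0) * grad 0))"
    using momentum[of 0] by (simp add: err_def grad_def algebra_simps)
  hence "err_sq 0 = (1-\<beta>)^2 * masked_sq 0"
    using beta_le_1 by (simp add: err_sq_def masked_sq_def power_mult_distrib)
  also have "\<dots> \<le> 1 * masked_sq 0"
    using beta_pos beta_le_1 by (intro mult_right_mono) (auto simp: squares_nonneg power_le_one)
  also have "\<dots> \<le> grad_sq 0"
    unfolding masked_sq_def grad_sq_def using norm_mask_mult_le[of "S 0" "grad 0"] by (simp add: power_mono)
  finally show ?thesis .
qed

lemma err_sq_within_period:
  "j < \<tau> \<Longrightarrow> err_sq (s*\<tau> + j) \<le> (1-\<beta>)^j * err_sq (s*\<tau>) + \<kappa> / \<beta> * (\<Sum>i<j. mom_sq (s*\<tau> + i))"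
proof (induction j)
  case (Suc j)
  have nonneg: "0 \<le> \<kappa> / \<beta> * (\<Sum>i<j. mom_sq (s*\<tau> + i))"
    using beta_pos squares_nonneg by (intro mult_nonneg_nonneg divide_nonneg_pos sum_nonneg) auto
  have "(s*\<tau> + Suc j) mod \<tau> \<noteq> 0" using Suc.prems by simp
  from err_sq_step[OF this]
  have "err_sq (s*\<tau> + Suc j) \<le> (1-\<beta>) * err_sq (s*\<tau> + j) + \<kappa> / \<beta> * mom_sq (s*\<tau> + j)" by simp
  also have "\<dots> \<le> (1-\<beta>) * ((1-\<beta>)^j * err_sq (s*\<tau>) + \<kappa> / \<beta> * (\<Sum>i<j. mom_sq (s*\<tau> + i)))
                 + \<kappa> / \<beta> * mom_sq (s*\<tau> + j)"
    using Suc beta_pos beta_le_1 squares_nonneg by (intro add_mono mult_left_mono) auto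
  also have "\<dots> \<le> (1-\<beta>)^Suc j * err_sq (s*\<tau>) + \<kappa> / \<beta> * (\<Sum>i<Suc j. mom_sq (s*\<tau> + i))"
    using mult_left_le_one_le[OF nonneg, of "1-\<beta>"] beta_pos beta_le_1 by (simp add: algebra_simps)
  finally show ?case .
qed simp

lemma period_err_sum_le:
  "period_sum err_sq s \<le> err_sq (s*\<tau>) / \<beta> + \<kappa> / \<beta>^2 * period_sum mom_sq s"
proof -
  obtain \<tau>' where \<tau>: "\<tau> = Suc \<tau>'" using tau_pos by (cases \<tau>) auto
  define b where "b = s*\<tau>"
  have "period_sum err_sq s = (\<Sum>j<Suc \<tau>'. err_sq (b + j))"
    unfolding period_sum_def b_def by (simp add: \<tau>)
  also have "\<dots> = err_sq b + (\<Sum>j<\<tau>'. err_sq (b + Suc j))"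
    by (subst sum.lessThan_Suc_shift) simp
  also have "(\<Sum>j<\<tau>'. err_sq (b + Suc j)) \<le> (\<Sum>j<\<tau>'. (1-\<beta>) * err_sq (b + j) + \<kappa> / \<beta> * mom_sq (b + j))"
  proof (rule sum_mono)
    fix j assume "j \<in> {..<\<tau>'}"
    hence "Suc j < \<tau>" by (simp add: \<tau>)
    hence "(b + Suc j) mod \<tau> \<noteq> 0" by (simp add: b_def)
    from err_sq_step[OF this]
    show "err_sq (b + Suc j) \<le> (1-\<beta>) * err_sq (b + j) + \<kappa> / \<beta> * mom_sq (b + j)" by simp
  qed
  also have "\<dots> = (1-\<beta>) * (\<Sum>j<\<tau>'. err_sq (b + j)) + \<kappa> / \<beta> * (\<Sum>j<\<tau>'. mom_sq (b + j))"
    by (simp add: sum.distrib sum_distrib_left)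
  also have "\<dots> \<le> (1-\<beta>) * period_sum err_sq s + \<kappa> / \<beta> * period_sum mom_sq s"
    unfolding period_sum_def b_def using beta_pos beta_le_1 squares_nonneg
    by (intro add_mono mult_left_mono sum_mono2) (auto simp: \<tau>)
  finally have "\<beta> * period_sum err_sq s \<le> err_sq b + \<kappa> / \<beta> * period_sum mom_sq s"
    by (simp add: algebra_simps)
  thus ?thesis unfolding b_def using beta_pos by (simp add: field_simps power2_eq_square)
qed

lemma grad_drift_within_period:
  assumes "j < \<tau>"
  shows "(norm (grad (s*\<tau> + j) - grad (s*\<tau>)))^2 \<le> \<kappa> * real \<tau> * period_sum mom_sq s"
proof -
  define b where "b = s*\<tau>"
  have "norm (x (b + j) - x b) = norm (\<Sum>i<j. x (b + Suc i) - x (b + i))"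
    by (subst sum_lessThan_telescope) simp
  also have "\<dots> \<le> (\<Sum>i<j. norm (x (b + Suc i) - x (b + i)))"
    by (rule norm_sum)
  also have "\<dots> = \<eta> * (\<Sum>i<j. norm (M (b + i)))"
    by (simp add: norm_iterate_diff sum_distrib_left)
  finally have "L * norm (x (b + j) - x b) \<le> L * (\<eta> * (\<Sum>i<j. norm (M (b + i))))"
    using L_nonneg by (rule mult_left_mono)
  with lipschitz[of "x (b + j)" "x b"]
  have "(norm (grad (b + j) - grad b))^2 \<le> (L * \<eta> * (\<Sum>i<j. norm (M (b + i))))^2"
    unfolding grad_def by (intro power_mono) (auto simp: mult.assoc)
  also have "\<dots> = \<kappa> * (\<Sum>i<j. norm (M (b + i)))^2" by (simp add: \<kappa>_def power_mult_distrib)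
  also have "\<dots> \<le> \<kappa> * ((\<Sum>i<j. (norm (M (b + i)))^2) * real j)"
    by (intro mult_left_mono sum_squared_le_sum_of_squares[of _ "{..<j}", simplified])
       (simp add: squares_nonneg)
  also have "\<dots> \<le> \<kappa> * (period_sum mom_sq s * real \<tau>)"
  proof (intro mult_left_mono mult_mono)
    show "(\<Sum>i<j. (norm (M (b + i)))^2) \<le> period_sum mom_sq s"
      unfolding period_sum_def mom_sq_def b_def using assms by (intro sum_mono2) auto
  qed (use assms in \<open>auto simp: squares_nonneg period_sum_nonneg\<close>)
  finally show ?thesis unfolding b_def by (simp add: ac_simps)
qed

lemma restart_grad_sq_le:
  "real \<tau> * \<delta> * grad_sq (s*\<tau>)
     \<le> 2 * period_sum masked_sq s + 2 * (\<kappa> * (real \<tau>)^2 * period_sum mom_sq s)"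
proof -
  define b where "b = s*\<tau>"
  have "\<delta> * grad_sq b \<le> 2 * masked_sq (b + j) + 2 * (\<kappa> * real \<tau> * period_sum mom_sq s)"
    if j: "j < \<tau>" for j
  proof -
    have "\<delta> * grad_sq b \<le> (norm (mask (S b) * grad b))^2"
      using mask_captures[of b] unfolding grad_sq_def grad_def b_def by simp
    also have "\<dots> \<le> 2 * (norm (mask (S b) * grad (b+j)))^2
                    + 2 * (norm (mask (S b) * grad b - mask (S b) * grad (b+j)))^2"
      by (rule norm_power2_le_twice)
    also have "(norm (mask (S b) * grad (b+j)))^2 = masked_sq (b + j)"
      unfolding masked_sq_def b_def using mask_within_period[OF j] by simp
    also have "(norm (mask (S b) * grad b - mask (S b) * grad (b+j)))^2 \<le> (norm (grad (b + j) - grad b))^2"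
      unfolding right_diff_distrib[symmetric]
      by (metis norm_mask_mult_le norm_minus_commute norm_ge_zero power_mono)
    finally show ?thesis using grad_drift_within_period[OF j, of s] unfolding b_def by linarith
  qed
  hence "(\<Sum>j<\<tau>. \<delta> * grad_sq b) \<le> (\<Sum>j<\<tau>. 2 * masked_sq (b + j) + 2 * (\<kappa> * real \<tau> * period_sum mom_sq s))"
    by (intro sum_mono) simp
  thus ?thesis
    by (simp add: b_def period_sum_def sum.distrib sum_distrib_left power2_eq_square algebra_simps)
qed

lemma period_grad_sum_le:
  "period_sum grad_sq s \<le> (4 * period_sum masked_sq s + 6 * (\<kappa> * (real \<tau>)^2 * period_sum mom_sq s)) / \<delta>"
proof -
  define b where "b = s*\<tau>"
  define D where "D = \<kappa> * (real \<tau>)^2 * period_sum mom_sq s"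
  have D_nonneg: "0 \<le> D" unfolding D_def by (simp add: squares_nonneg period_sum_nonneg)
  have "grad_sq (b + j) \<le> 2 * grad_sq b + 2 * (\<kappa> * real \<tau> * period_sum mom_sq s)" if "j < \<tau>" for j
    using norm_power2_le_twice[of "grad (b+j)" "grad b"] grad_drift_within_period[OF that, of s]
    unfolding grad_sq_def b_def by linarith
  hence "period_sum grad_sq s \<le> (\<Sum>j<\<tau>. 2 * grad_sq b + 2 * (\<kappa> * real \<tau> * period_sum mom_sq s))"
    unfolding period_sum_def b_def by (intro sum_mono) simp
  also have "\<dots> = 2 * (real \<tau> * grad_sq b) + 2 * D"
    by (simp add: D_def power2_eq_square algebra_simps)
  also have "\<dots> \<le> 2 * ((2 * period_sum masked_sq s + 2 * D) / \<delta>) + 2 * D / \<delta>"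
  proof (intro add_mono mult_left_mono)
    show "real \<tau> * grad_sq b \<le> (2 * period_sum masked_sq s + 2 * D) / \<delta>"
      using restart_grad_sq_le[of s] delta_pos by (simp add: b_def D_def pos_le_divide_eq algebra_simps)
    show "2 * D \<le> 2 * D / \<delta>"
      using D_nonneg delta_pos delta_le_1 by (simp add: le_divide_eq mult_left_le)
  qed simp
  also have "\<dots> = (4 * period_sum masked_sq s + 6 * D) / \<delta>" using delta_pos by (simp add: field_simps)
  finally show ?thesis unfolding D_def .
qed

lemma err_sq_next_restart:
  assumes long_period: "7 \<le> real \<tau> * \<beta>"
  shows "err_sq (Suc s * \<tau>)
           \<le> 1/4 * err_sq (s*\<tau>) + 4 * \<kappa> / \<beta> * period_sum mom_sq s + 2 * grad_sq (Suc s * \<tau>)"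
proof -
  define t where "t = Suc s * \<tau>"
  define D where "D = \<kappa> / \<beta> * period_sum mom_sq s"
  have t_pred: "t - 1 = s*\<tau> + (\<tau> - 1)" using tau_pos by (simp add: t_def)
  have D_nonneg: "0 \<le> D"
    unfolding D_def using beta_pos by (simp add: period_sum_nonneg squares_nonneg)
  have "(\<Sum>i<\<tau>-1. mom_sq (s*\<tau> + i)) \<le> period_sum mom_sq s"
    unfolding period_sum_def by (intro sum_mono2) (auto simp: squares_nonneg)
  hence "\<kappa> / \<beta> * (\<Sum>i<\<tau>-1. mom_sq (s*\<tau> + i)) \<le> D"
    unfolding D_def using beta_pos squares_nonneg by (intro mult_left_mono) auto
  moreover have "err_sq (t-1) \<le> (1-\<beta>)^(\<tau>-1) * err_sq (s*\<tau>) + \<kappa> / \<beta> * (\<Sum>i<\<tau>-1. mom_sq (s*\<tau> + i))"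
    unfolding t_pred by (rule err_sq_within_period) (use tau_pos in auto)
  ultimately have prev: "err_sq (t-1) \<le> (1-\<beta>)^(\<tau>-1) * err_sq (s*\<tau>) + D"
    by linarith
  have "mom_sq (t-1) \<le> period_sum mom_sq s"
    unfolding t_pred period_sum_def by (rule member_le_sum) (use tau_pos squares_nonneg in auto)
  moreover have "\<kappa> \<le> \<kappa> / \<beta>"
    using beta_pos beta_le_1 squares_nonneg by (simp add: le_divide_eq mult_left_le)
  ultimately have mom: "\<kappa> * mom_sq (t-1) \<le> D"
    unfolding D_def using squares_nonneg period_sum_nonneg
    by (meson mult_left_mono mult_right_mono order_trans)
  have "err_sq t \<le> (1-\<beta>) * (2 * err_sq (t-1) + 2 * \<kappa> * mom_sq (t-1) + 2 * grad_sq t)"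
    by (rule err_sq_restart) (use tau_pos in \<open>auto simp: t_def\<close>)
  also have "\<dots> \<le> (1-\<beta>) * (2 * (1-\<beta>)^(\<tau>-1) * err_sq (s*\<tau>) + 4 * D + 2 * grad_sq t)"
    using prev mom beta_le_1 by (intro mult_left_mono) auto
  also have "\<dots> = 2 * (1-\<beta>)^\<tau> * err_sq (s*\<tau>) + (1-\<beta>) * (4 * D + 2 * grad_sq t)"
    using tau_pos by (cases \<tau>) (auto simp: algebra_simps)
  also have "\<dots> \<le> 2 * (1/8) * err_sq (s*\<tau>) + 1 * (4 * D + 2 * grad_sq t)"
    using one_minus_power_le_eighth[OF beta_pos beta_le_1 long_period] beta_pos beta_le_1
      squares_nonneg D_nonneg
    by (intro add_mono mult_right_mono mult_left_mono) auto
  finally show ?thesis unfolding D_def t_def by simp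
qed

lemma sum_descent:
  "(\<Sum>t<N. masked_sq t + 3/4 * mom_sq t - err_sq t) \<le> 2 * (f (x 0) - f (x N)) / \<eta>"
proof -
  have "(\<Sum>t<N. masked_sq t + 3/4 * mom_sq t - err_sq t) \<le> (\<Sum>t<N. 2 * (f (x t) - f (x (Suc t))) / \<eta>)"
    by (intro sum_mono one_step_descent)
  also have "\<dots> = 2 * (\<Sum>t<N. f (x t) - f (x (Suc t))) / \<eta>"
    by (simp add: sum_divide_distrib sum_distrib_left)
  also have "(\<Sum>t<N. f (x t) - f (x (Suc t))) = f (x 0) - f (x N)"
    by (rule sum_lessThan_telescope')
  finally show ?thesis .
qed

lemma sum_restart_err_sq_le:
  assumes "7 \<le> real \<tau> * \<beta>"
  shows "3/4 * (\<Sum>s<K. err_sq (s*\<tau>))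
           \<le> 2 * (\<Sum>s<K. grad_sq (s*\<tau>)) + 4 * \<kappa> / \<beta> * (\<Sum>s<K. period_sum mom_sq s)"
proof (cases K)
  case (Suc K')
  have "(\<Sum>s<K. err_sq (s*\<tau>)) = err_sq 0 + (\<Sum>s<K'. err_sq (Suc s * \<tau>))"
    unfolding Suc by (subst sum.lessThan_Suc_shift) simp
  also have "(\<Sum>s<K'. err_sq (Suc s * \<tau>))
      \<le> (\<Sum>s<K'. 1/4 * err_sq (s*\<tau>) + 4 * \<kappa> / \<beta> * period_sum mom_sq s + 2 * grad_sq (Suc s * \<tau>))"
    by (intro sum_mono err_sq_next_restart assms)
  also have "\<dots> = 1/4 * (\<Sum>s<K'. err_sq (s*\<tau>)) + 4 * \<kappa> / \<beta> * (\<Sum>s<K'. period_sum mom_sq s)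
                  + 2 * (\<Sum>s<K'. grad_sq (Suc s * \<tau>))"
    by (simp add: sum.distrib sum_distrib_left)
  finally have "(\<Sum>s<K. err_sq (s*\<tau>)) \<le> err_sq 0 + 1/4 * (\<Sum>s<K'. err_sq (s*\<tau>))
      + 4 * \<kappa> / \<beta> * (\<Sum>s<K'. period_sum mom_sq s) + 2 * (\<Sum>s<K'. grad_sq (Suc s * \<tau>))"
    by simp
  moreover have "(\<Sum>s<K'. err_sq (s*\<tau>)) \<le> (\<Sum>s<K. err_sq (s*\<tau>))"
    unfolding Suc by (simp add: squares_nonneg)
  moreover have "4 * \<kappa> / \<beta> * (\<Sum>s<K'. period_sum mom_sq s) \<le> 4 * \<kappa> / \<beta> * (\<Sum>s<K. period_sum mom_sq s)"
    unfolding Suc using beta_pos squares_nonneg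
    by (intro mult_left_mono) (auto simp: period_sum_nonneg)
  moreover have "(\<Sum>s<K. grad_sq (s*\<tau>)) = grad_sq 0 + (\<Sum>s<K'. grad_sq (Suc s * \<tau>))"
    unfolding Suc by (subst sum.lessThan_Suc_shift) simp
  ultimately show ?thesis using err_sq_0 squares_nonneg(1)[of 0] by linarith
qed simp

lemma grad_sq_sum_le:
  assumes long_period: "64/3 \<le> real \<tau> * \<beta> * \<delta>"
    and eta_beta: "(L * \<eta>)^2 \<le> 3 * \<delta> * \<beta>^2 / 80"
    and eta_tau: "(L * \<eta>)^2 * (real \<tau>)^2 \<le> 3 * \<delta> / 80"
  shows "(\<Sum>t<K*\<tau>. (norm (g (x t)))^2) \<le> 32/3 * (f (x 0) - f (x (K*\<tau>))) / (\<delta> * \<eta>)"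
proof -
  define A where "A = (\<Sum>s<K. period_sum masked_sq s)"
  define V where "V = (\<Sum>s<K. period_sum mom_sq s)"
  define W where "W = (\<Sum>s<K. period_sum err_sq s)"
  define X where "X = (\<Sum>s<K. err_sq (s*\<tau>))"
  define Z where "Z = (\<Sum>s<K. grad_sq (s*\<tau>))"
  define F where "F = (f (x 0) - f (x (K*\<tau>))) / \<eta>"
  define p where "p = \<kappa> / \<beta>^2"
  define q where "q = \<kappa> * (real \<tau>)^2"
  have A_nonneg: "0 \<le> A" and V_nonneg: "0 \<le> V"
    unfolding A_def V_def by (simp_all add: sum_nonneg period_sum_nonneg squares_nonneg)
  have "real \<tau> * \<beta> * \<delta> \<le> real \<tau> * \<beta>"
    using delta_le_1 beta_pos by (simp add: mult_left_le)
  hence "7 \<le> real \<tau> * \<beta>" using long_period by simp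
  have descent_sum: "A + 3/4 * V - W \<le> 2 * F"
    using sum_descent[of "K*\<tau>"]
    by (simp add: A_def V_def W_def F_def sum_period_sum sum_subtractf sum.distrib sum_distrib_left
        period_sum_def)
  have "W \<le> (\<Sum>s<K. err_sq (s*\<tau>) / \<beta> + p * period_sum mom_sq s)"
    unfolding W_def p_def by (intro sum_mono period_err_sum_le)
  hence err_sum: "W \<le> X / \<beta> + p * V"
    by (simp add: X_def V_def sum.distrib sum_divide_distrib sum_distrib_left)
  have "X / \<beta> \<le> (4/3 * (2 * Z + 4 * \<kappa> / \<beta> * V)) / \<beta>"
    using sum_restart_err_sq_le[OF \<open>7 \<le> real \<tau> * \<beta>\<close>, of K] beta_pos
    unfolding X_def Z_def V_def by (intro divide_right_mono) auto
  hence restart_err: "X / \<beta> \<le> 8/3 * (Z / \<beta>) + 16/3 * (p * V)"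
    using beta_pos by (simp add: p_def power2_eq_square field_simps)
  have "(\<Sum>s<K. real \<tau> * \<delta> * grad_sq (s*\<tau>))
          \<le> (\<Sum>s<K. 2 * period_sum masked_sq s + 2 * (q * period_sum mom_sq s))"
    unfolding q_def by (intro sum_mono restart_grad_sq_le)
  hence "real \<tau> * \<delta> * Z \<le> 2 * A + 2 * (q * V)"
    by (simp add: A_def V_def Z_def sum.distrib sum_distrib_left)
  moreover have "64/3 * (Z / \<beta>) \<le> (real \<tau> * \<beta> * \<delta>) * (Z / \<beta>)"
    using long_period beta_pos by (intro mult_right_mono) (auto simp: Z_def sum_nonneg squares_nonneg)
  ultimately have restart_grad: "64/3 * (Z / \<beta>) \<le> 2 * A + 2 * (q * V)"
    using beta_pos by simp
  have "3 * \<delta> * \<beta>^2 / 80 \<le> 3/80 * \<beta>^2" using delta_pos delta_le_1 by (simp add: mult_left_le_one_le)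
  hence "\<kappa> \<le> 3/80 * \<beta>^2" using eta_beta by (simp add: \<kappa>_def)
  hence "p \<le> 3/80" using beta_pos by (simp add: p_def pos_divide_le_eq)
  moreover have "q \<le> 3/80" "0 \<le> q" using eta_tau delta_le_1 squares_nonneg by (simp_all add: q_def \<kappa>_def)
  ultimately have "4 * A + 6 * (q * V) \<le> 32/3 * F"
    by (intro error_terms_absorbed[OF descent_sum err_sum restart_err restart_grad] A_nonneg V_nonneg)
  hence "(4 * A + 6 * (q * V)) / \<delta> \<le> 32/3 * F / \<delta>"
    using delta_pos by (intro divide_right_mono) auto
  moreover have "(\<Sum>s<K. period_sum grad_sq s)
          \<le> (\<Sum>s<K. (4 * period_sum masked_sq s + 6 * (q * period_sum mom_sq s)) / \<delta>)"
    unfolding q_def by (intro sum_mono period_grad_sum_le)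
  hence "(\<Sum>t<K*\<tau>. grad_sq t) \<le> (4 * A + 6 * (q * V)) / \<delta>"
    by (simp add: sum_period_sum A_def V_def sum.distrib sum_distrib_left sum_divide_distrib[symmetric])
  ultimately have "(\<Sum>t<K*\<tau>. grad_sq t) \<le> 32/3 * F / \<delta>" by linarith
  thus ?thesis by (simp add: grad_sq_def grad_def F_def mult.commute)
qed

end

lemma gasare_msgd_masked_momentum_run:
  fixes f :: "real ^ 'i::finite \<Rightarrow> real"
  assumes coord: "bij_betw coord UNIV (layer_dom NL m n)"
    and grad: "\<And>x. (f has_derivative (\<lambda>h. g x \<bullet> h)) (at x)"
    and lip: "\<And>x y. norm (g x - g y) \<le> L * norm (x - y)"
    and L: "0 \<le> L"
    and kpos: "\<And>l. l < NL \<Longrightarrow> 0 < k l"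
    and klt: "\<And>l. l < NL \<Longrightarrow> k l < m l * n l"
    and beta: "0 < \<beta>" "\<beta> \<le> 1" and tau: "0 < \<tau>" and eta: "0 < \<eta>" "L * \<eta> \<le> 1/4"
    and run: "gasare_msgd coord NL k \<tau> \<beta> \<eta> g x M S"
  shows "masked_momentum_run f g L \<beta> \<eta> (delta_min NL m n k) \<tau> x M S"
proof
  fix t
  show "f (x (Suc t)) \<le> f (x t) + g (x t) \<bullet> (x (Suc t) - x t) + L / 2 * (norm (x (Suc t) - x t))^2"
    by (rule descent_lemma[OF grad lip])
  show "M t = (1-\<beta>) *\<^sub>R (mask (S t) * (if t = 0 then 0 else M (t-1))) + \<beta> *\<^sub>R (mask (S t) * g (x t))"
    and "x (Suc t) = x t - \<eta> *\<^sub>R (mask (S t) * M t)"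
    using run unfolding gasare_msgd_def by blast+
  show "t mod \<tau> \<noteq> 0 \<Longrightarrow> S t = S (t-1)"
    using run unfolding gasare_msgd_def by metis
  assume "t mod \<tau> = 0"
  hence "is_topk_mask coord NL k (g (x t)) (S t)"
    using run unfolding gasare_msgd_def by metis
  thus "delta_min NL m n k * (norm (g (x t)))^2 \<le> (norm (mask (S t) * g (x t)))^2"
    using topk_mask_norm_ge[OF coord klt] by blast
qed (use lip L beta tau eta delta_min_bounds[OF coord kpos klt] in auto)

lemma gasare_msgd_grad_sq_sum_le:
  fixes f :: "real ^ 'i::finite \<Rightarrow> real"
  assumes coord: "bij_betw coord UNIV (layer_dom NL m n)"
    and grad: "\<And>x. (f has_derivative (\<lambda>h. g x \<bullet> h)) (at x)"
    and bdd: "bdd_below (range f)"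
    and lip: "\<And>x y. norm (g x - g y) \<le> L * norm (x - y)"
    and L: "0 < L"
    and kpos: "\<And>l. l < NL \<Longrightarrow> 0 < k l"
    and klt: "\<And>l. l < NL \<Longrightarrow> k l < m l * n l"
    and beta: "0 < \<beta>" "\<beta> \<le> 1"
    and tau: "64 / (3 * \<beta> * delta_min NL m n k) \<le> real \<tau>"
    and eta: "0 < \<eta>" "\<eta> \<le> 1 / (4 * L)"
      "\<eta> \<le> sqrt (3 * delta_min NL m n k * \<beta>^2 / (80 * L^2))"
      "\<eta> \<le> sqrt (3 * delta_min NL m n k / (80 * (real \<tau>)^2 * L^2))"
    and run: "gasare_msgd coord NL k \<tau> \<beta> \<eta> g x M S"
  shows "(\<Sum>t<K * \<tau>. (norm (g (x t)))^2) \<le> 16 * (f (x 0) - Inf (range f)) / (delta_min NL m n k * \<eta>)"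
proof -
  define \<delta> where "\<delta> = delta_min NL m n k"
  have \<delta>: "0 < \<delta>" "\<delta> \<le> 1" unfolding \<delta>_def using delta_min_bounds[OF coord kpos klt] by auto
  have long_period: "64/3 \<le> real \<tau> * \<beta> * \<delta>"
    using tau beta \<delta> by (simp add: \<delta>_def divide_le_eq mult.commute mult.left_commute)
  hence "0 < \<tau>" by (cases \<tau>) auto
  have "L * \<eta> \<le> 1/4" using eta(2) L by (simp add: le_divide_eq ac_simps)
  then interpret masked_momentum_run f g L \<beta> \<eta> \<delta> \<tau> x M S
    unfolding \<delta>_def using gasare_msgd_masked_momentum_run[OF coord grad lip _ kpos klt beta \<open>0 < \<tau>\<close> eta(1) _ run] L
    by simp
  have "\<eta>^2 \<le> 3 * \<delta> * \<beta>^2 / (80 * L^2)" "\<eta>^2 \<le> 3 * \<delta> / (80 * (real \<tau>)^2 * L^2)"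
    using eta sqrt_ge_absD unfolding \<delta>_def by auto
  hence "(L * \<eta>)^2 \<le> 3 * \<delta> * \<beta>^2 / 80" "(L * \<eta>)^2 * (real \<tau>)^2 \<le> 3 * \<delta> / 80"
    using L \<open>0 < \<tau>\<close> by (simp_all add: le_divide_eq power_mult_distrib ac_simps)
  from grad_sq_sum_le[OF long_period this]
  have "(\<Sum>t<K*\<tau>. (norm (g (x t)))^2) \<le> 32/3 * (f (x 0) - f (x (K*\<tau>))) / (\<delta> * \<eta>)" .
  also have "32/3 * (f (x 0) - f (x (K*\<tau>))) \<le> 16 * (f (x 0) - Inf (range f))"
    using cInf_lower[OF rangeI bdd, of "x 0"] cInf_lower[OF rangeI bdd, of "x (K*\<tau>)"]
    unfolding right_diff_distrib by linarith
  hence "32/3 * (f (x 0) - f (x (K*\<tau>))) / (\<delta> * \<eta>) \<le> 16 * (f (x 0) - Inf (range f)) / (\<delta> * \<eta>)"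
    using \<delta> eta(1) by (intro divide_right_mono) auto
  finally show ?thesis unfolding \<delta>_def .
qed

lemma nat_ceiling_bounds:
  fixes y :: real
  assumes "0 < y"
  shows "y \<le> real (nat \<lceil>y\<rceil>)" "real (nat \<lceil>y\<rceil>) \<le> y + 1"
proof -
  have "real (nat \<lceil>y\<rceil>) = of_int \<lceil>y\<rceil>" using assms by simp
  thus "y \<le> real (nat \<lceil>y\<rceil>)" "real (nat \<lceil>y\<rceil>) \<le> y + 1"
    by (simp_all add: le_of_int_ceiling of_int_ceiling_le_add_one)
qed

lemma sqrt_le_divide:
  fixes a c p :: real
  assumes "0 < p" "0 \<le> c" "a * p^2 \<le> c^2"
  shows "sqrt a \<le> c / p"
proof -
  have "sqrt a * p = sqrt (a * p^2)" using assms by (simp add: real_sqrt_mult)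
  also have "\<dots> \<le> c" using assms by (simp add: real_le_lsqrt)
  finally show ?thesis using assms by (simp add: pos_le_divide_eq)
qed

definition tuned_step_inverse :: "real \<Rightarrow> real \<Rightarrow> nat \<Rightarrow> real" where
  "tuned_step_inverse \<delta> L \<tau> = 4 * L + sqrt (80 * L^2 / (3 * \<delta>)) + sqrt (80 * (real \<tau>)^2 * L^2 / (3 * \<delta>))
                              + sqrt (16 * real \<tau> * L^2 / 3)"

lemma tuned_step_size_admissible:
  fixes \<delta> L :: real
  assumes "0 < \<delta>" "0 < L" "0 < \<tau>"
  defines "\<eta> \<equiv> inverse (tuned_step_inverse \<delta> L \<tau>)"
  shows "0 < \<eta>" "\<eta> \<le> 1 / (4 * L)" "\<eta> \<le> sqrt (3 * \<delta> / (80 * L^2))"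
    "\<eta> \<le> sqrt (3 * \<delta> / (80 * (real \<tau>)^2 * L^2))"
proof -
  define s1 where "s1 = sqrt (80 * L^2 / (3 * \<delta>))"
  define s2 where "s2 = sqrt (80 * (real \<tau>)^2 * L^2 / (3 * \<delta>))"
  define s3 where "s3 = sqrt (16 * real \<tau> * L^2 / 3)"
  have pos: "0 < s1" "0 < s2" "0 < s3" unfolding s1_def s2_def s3_def using assms by simp_all
  have D: "tuned_step_inverse \<delta> L \<tau> = 4 * L + s1 + s2 + s3"
    by (simp add: tuned_step_inverse_def s1_def s2_def s3_def)
  have le_inverse: "\<eta> \<le> inverse s" if "0 < s" "s \<le> tuned_step_inverse \<delta> L \<tau>" for s
    unfolding \<eta>_def using that by (intro le_imp_inverse_le) auto
  show "0 < \<eta>" unfolding \<eta>_def D using pos assms by simp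
  show "\<eta> \<le> 1 / (4 * L)" using le_inverse[of "4 * L"] pos assms by (simp add: D inverse_eq_divide)
  have "sqrt (3 * \<delta> / (80 * L^2)) = inverse s1"
    unfolding s1_def by (simp add: real_sqrt_inverse[symmetric] inverse_divide)
  thus "\<eta> \<le> sqrt (3 * \<delta> / (80 * L^2))" using le_inverse[of s1] pos assms by (simp add: D)
  have "sqrt (3 * \<delta> / (80 * (real \<tau>)^2 * L^2)) = inverse s2"
    unfolding s2_def by (simp add: real_sqrt_inverse[symmetric] inverse_divide)
  thus "\<eta> \<le> sqrt (3 * \<delta> / (80 * (real \<tau>)^2 * L^2))" using le_inverse[of s2] pos assms by (simp add: D)
qed

lemma tuned_step_inverse_le:
  fixes \<delta> L :: real
  assumes \<delta>: "0 < \<delta>" "\<delta> \<le> 1" and L: "0 < L" and \<tau>: "real \<tau> * \<delta> \<le> 67/3"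
  shows "tuned_step_inverse \<delta> L \<tau> \<le> 273/2 * L / (\<delta> * sqrt \<delta>)"
proof -
  define P where "P = \<delta> * sqrt \<delta>"
  have P: "0 < P" "P \<le> 1" "P^2 = \<delta>^3"
    unfolding P_def using \<delta> by (simp_all add: mult_le_one power_mult_distrib power2_eq_square power3_eq_cube)
  have \<tau>\<delta>: "0 \<le> real \<tau> * \<delta>" using \<delta> by simp
  have "4 * L \<le> 4 * L / P" using P L by (simp add: le_divide_eq mult_left_le)
  moreover have "sqrt (80 * L^2 / (3 * \<delta>)) \<le> 6 * L / P"
  proof (rule sqrt_le_divide)
    have "80 * L^2 / (3 * \<delta>) * P^2 = 80/3 * L^2 * \<delta>^2"
      unfolding P using \<delta> by (simp add: power2_eq_square power3_eq_cube field_simps)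
    also have "\<dots> \<le> 80/3 * L^2 * 1" using \<delta> by (intro mult_left_mono) (auto simp: power_le_one)
    also have "\<dots> \<le> (6 * L)^2" by (simp add: power2_eq_square)
    finally show "80 * L^2 / (3 * \<delta>) * P^2 \<le> (6 * L)^2" .
  qed (use P L in auto)
  moreover have "sqrt (80 * (real \<tau>)^2 * L^2 / (3 * \<delta>)) \<le> 231/2 * L / P"
  proof (rule sqrt_le_divide)
    have "80 * (real \<tau>)^2 * L^2 / (3 * \<delta>) * P^2 = 80/3 * L^2 * (real \<tau> * \<delta>)^2"
      unfolding P using \<delta> by (simp add: power2_eq_square power3_eq_cube field_simps)
    also have "\<dots> \<le> 80/3 * L^2 * (67/3)^2" using \<tau> \<tau>\<delta> by (intro mult_left_mono power_mono) auto
    also have "\<dots> \<le> (231/2 * L)^2" by (simp add: power2_eq_square)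
    finally show "80 * (real \<tau>)^2 * L^2 / (3 * \<delta>) * P^2 \<le> (231/2 * L)^2" .
  qed (use P L in auto)
  moreover have "sqrt (16 * real \<tau> * L^2 / 3) \<le> 11 * L / P"
  proof (rule sqrt_le_divide)
    have "16 * real \<tau> * L^2 / 3 * P^2 = 16/3 * L^2 * ((real \<tau> * \<delta>) * \<delta>^2)"
      unfolding P by (simp add: power2_eq_square power3_eq_cube field_simps)
    also have "\<dots> \<le> 16/3 * L^2 * ((67/3) * 1)"
      using \<tau> \<tau>\<delta> \<delta> by (intro mult_left_mono mult_mono) (auto simp: power_le_one)
    also have "\<dots> \<le> (11 * L)^2" by (simp add: power2_eq_square)
    finally show "16 * real \<tau> * L^2 / 3 * P^2 \<le> (11 * L)^2" .
  qed (use P L in auto)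
  moreover have "4 * L / P + 6 * L / P + 231/2 * L / P + 11 * L / P = 273/2 * L / P"
    by (simp add: field_simps)
  ultimately show ?thesis unfolding tuned_step_inverse_def P_def by linarith
qed

lemma gasare_msgd_tuned_rate:
  fixes f :: "real ^ 'i::finite \<Rightarrow> real"
  assumes coord: "bij_betw coord UNIV (layer_dom NL m n)"
    and grad: "\<And>x. (f has_derivative (\<lambda>h. g x \<bullet> h)) (at x)"
    and bdd: "bdd_below (range f)"
    and lip: "\<And>x y. norm (g x - g y) \<le> L * norm (x - y)"
    and L: "0 < L"
    and kpos: "\<And>l. l < NL \<Longrightarrow> 0 < k l"
    and klt: "\<And>l. l < NL \<Longrightarrow> k l < m l * n l"
    and tau: "\<tau> = nat \<lceil>64 / (3 * delta_min NL m n k)\<rceil>"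
    and eta: "\<eta> = inverse (tuned_step_inverse (delta_min NL m n k) L \<tau>)"
    and run: "gasare_msgd coord NL k \<tau> 1 \<eta> g x M S"
  shows "(\<Sum>t<T. (norm (g (x t)))^2) \<le> 2200 * L * (f (x 0) - Inf (range f)) / delta_min NL m n k powr (5/2)"
proof -
  define \<delta> where "\<delta> = delta_min NL m n k"
  define \<Delta> where "\<Delta> = f (x 0) - Inf (range f)"
  have \<delta>: "0 < \<delta>" "\<delta> \<le> 1" unfolding \<delta>_def using delta_min_bounds[OF coord kpos klt] by auto
  have \<Delta>: "0 \<le> \<Delta>" unfolding \<Delta>_def using cInf_lower[OF rangeI bdd] by simp
  have tau_lower: "64 / (3 * \<delta>) \<le> real \<tau>" and "real \<tau> \<le> 64 / (3 * \<delta>) + 1"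
    using nat_ceiling_bounds[of "64 / (3 * \<delta>)"] \<delta> tau unfolding \<delta>_def by auto
  hence "real \<tau> * \<delta> \<le> 67/3" using \<delta> by (simp add: field_simps)
  have "0 < \<tau>" using tau_lower \<delta> by (cases \<tau>) auto
  have admissible: "0 < \<eta>" "\<eta> \<le> 1 / (4 * L)" "\<eta> \<le> sqrt (3 * \<delta> / (80 * L^2))"
    "\<eta> \<le> sqrt (3 * \<delta> / (80 * (real \<tau>)^2 * L^2))"
    using tuned_step_size_admissible[OF \<delta>(1) L \<open>0 < \<tau>\<close>] unfolding eta \<delta>_def by auto
  have "(\<Sum>t<T. (norm (g (x t)))^2) \<le> (\<Sum>t<T * \<tau>. (norm (g (x t)))^2)"
    using \<open>0 < \<tau>\<close> by (intro sum_mono2) auto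
  also have "\<dots> \<le> 16 * \<Delta> / (\<delta> * \<eta>)"
    unfolding \<Delta>_def \<delta>_def
    by (rule gasare_msgd_grad_sq_sum_le[OF coord grad bdd lip L kpos klt _ _ _ _ _ _ _ run])
       (use tau_lower admissible in \<open>simp_all add: \<delta>_def\<close>)
  also have "\<dots> = 16 * \<Delta> * tuned_step_inverse \<delta> L \<tau> / \<delta>"
    using admissible(1) by (simp add: eta \<delta>_def field_simps)
  also have "\<dots> \<le> 16 * \<Delta> * (273/2 * L / (\<delta> * sqrt \<delta>)) / \<delta>"
    using tuned_step_inverse_le[OF \<delta> L \<open>real \<tau> * \<delta> \<le> 67/3\<close>] \<Delta> \<delta>
    by (intro divide_right_mono mult_left_mono) auto
  also have "\<dots> \<le> 2200 * L * \<Delta> / \<delta> powr (5/2)"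
  proof -
    have "\<delta> powr (5/2) = \<delta> powr 2 * \<delta> powr (1/2)" by (simp add: powr_add[symmetric])
    hence "\<delta> powr (5/2) = \<delta> * (\<delta> * sqrt \<delta>)"
      using \<delta> by (simp add: powr_half_sqrt power2_eq_square)
    thus ?thesis using \<Delta> \<delta> L by (simp add: field_simps mult_right_mono)
  qed
  finally show ?thesis unfolding \<Delta>_def \<delta>_def .
qed

theorem theoremC4:
  fixes f :: "real ^ 'i::finite \<Rightarrow> real" and g :: "real ^ 'i \<Rightarrow> real ^ 'i"
    and coord :: "'i \<Rightarrow> nat \<times> nat \<times> nat"
    and NL :: nat and m n k :: "nat \<Rightarrow> nat" and L :: real
  assumes coord: "bij_betw coord UNIV (layer_dom NL m n)"
    and grad: "\<And>x. (f has_derivative (\<lambda>h. g x \<bullet> h)) (at x)"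
    and A1: "bdd_below (range f)"
    and A2: "\<And>x y. norm (g x - g y) \<le> L * norm (x - y)"
    and Lpos: "L > 0"
    and kpos: "\<And>l. l < NL \<Longrightarrow> 0 < k l"
    and klt: "\<And>l. l < NL \<Longrightarrow> k l < m l * n l"
  shows
   "(\<forall>(\<beta>1::real) (\<tau>::nat) (\<eta>::real) (x::nat \<Rightarrow> real ^ 'i) M S.
       0 < \<beta>1 \<and> \<beta>1 \<le> 1 \<and> real \<tau> \<ge> 64 / (3 * \<beta>1 * delta_min NL m n k) \<and>
       0 < \<eta> \<and>
       \<eta> \<le> min (min (1 / (4 * L)) (sqrt (3 * delta_min NL m n k * \<beta>1^2 / (80 * L^2))))
               (min (sqrt (3 * delta_min NL m n k / (80 * (real \<tau>)^2 * L^2)))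
                    (sqrt (3 * \<beta>1 / (16 * real \<tau> * L^2)))) \<and>
       gasare_msgd coord NL k \<tau> \<beta>1 \<eta> g x M S
       \<longrightarrow> (\<forall>K::nat. K \<ge> 1 \<longrightarrow>
             (1 / real (K * \<tau>)) * (\<Sum>t<K * \<tau>. (norm (g (x t)))^2)
               \<le> 16 * (f (x 0) - Inf (range f)) / (delta_min NL m n k * \<eta> * real (K * \<tau>))))
    \<and>
    (\<forall>(\<beta>1::real) (\<tau>::nat) (\<eta>::real) (x::nat \<Rightarrow> real ^ 'i) M S (T::nat).
       f (x 0) - Inf (range f) > 0 \<and>
       real T \<ge> 64 / (3 * delta_min NL m n k) \<and>
       \<beta>1 = 1 \<and>
       \<tau> = nat \<lceil>64 / (3 * delta_min NL m n k * \<beta>1)\<rceil> \<and>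
       \<eta> = inverse (4 * L + sqrt (80 * L^2 / (3 * delta_min NL m n k * \<beta>1^2))
                    + sqrt (80 * (real \<tau>)^2 * L^2 / (3 * delta_min NL m n k))
                    + sqrt (16 * real \<tau> * L^2 / (3 * \<beta>1))) \<and>
       gasare_msgd coord NL k \<tau> \<beta>1 \<eta> g x M S
       \<longrightarrow> (1 / real T) * (\<Sum>t<T. (norm (g (x t)))^2)
             \<le> 2200 * L * (f (x 0) - Inf (range f)) / (delta_min NL m n k powr (5/2) * real T))"
proof (intro conjI allI impI, goal_cases)
  case (1 \<beta>1 \<tau> \<eta> x M S K)
  hence "(\<Sum>t<K * \<tau>. (norm (g (x t)))^2) \<le> 16 * (f (x 0) - Inf (range f)) / (delta_min NL m n k * \<eta>)"
    by (intro gasare_msgd_grad_sq_sum_le[OF coord grad A1 A2 Lpos kpos klt]) auto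
  from divide_right_mono[OF this, of "real (K * \<tau>)"] show ?case by simp
next
  case (2 \<beta>1 \<tau> \<eta> x M S T)
  hence "(\<Sum>t<T. (norm (g (x t)))^2) \<le> 2200 * L * (f (x 0) - Inf (range f)) / delta_min NL m n k powr (5/2)"
    by (intro gasare_msgd_tuned_rate[OF coord grad A1 A2 Lpos kpos klt]) (auto simp: tuned_step_inverse_def)
  from divide_right_mono[OF this, of "real T"] show ?case by simp
qed

end
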